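(* Let $I$ be a finite set and $T$ a tree on $I$. Let $a_1,\dots,a_k$ be atoms of the lattice $[\hat{0},T]$ whose vertices $v_1,\dots,v_k\in\mathcal{V}(T)$ are pairwise distinct. Then $\mathcal{V}(a_1\vee a_2\vee\dots\vee a_k)=\{v_1,\dots,v_k\}$, where the join is taken in $[\hat{0},T]$.
   Context: A tree on a finite set $I$ is a (non-planar) rooted binary tree whose leaves are bijectively labeled by $I$: vertices are inner vertices (valence $3$) and leaves and the root (valence $1$), edges oriented towards the root; one-leaf trees are allowed. A forest on $I$ is a set of trees whose leaf sets partition $I$; $\mathcal{V}(F)$ is its set of inner vertices. For forests $F,G$ on $I$, $F \leq G$ if there is a continuous map $F\to G$ which (D1) is increasing with respect to orientation towards the root, (D2) maps inner vertices to inner vertices injectively, (D3) is the identity of $I$ on leaves, (D4) is injective on each tree of $F$. This gives the poset $\operatorname{For}(I)$ with minimum $\hat{0}$ (no inner vertices); the interval $[\hat{0},T]$ is a lattice. For $F\le T$ the inner vertices of $F$ are regarded, via these maps, as a subset $\mathcal{V}(F)\subseteq\mathcal{V}(T)$. For distinct leaves $i,j$, $v_{(i,j)}$ is the inner vertex of $T$ where the paths from $i$ and $j$ down to the root meet. The atoms of $[\hat{0},T]$ are the forests with exactly one inner vertex; they correspond to unordered pairs $(i,j)$ of distinct elements of $I$ (one two-leaf tree on $\{i,j\}$, all other leaves isolated), and the vertex of the atom $(i,j)$ is $v_{(i,j)}$, i.e. $\mathcal{V}((i,j))=\{v_{(i,j)}\}$. *)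

theory Defs
  imports Main
begin

text \<open>A (non-planar) rooted binary tree with leaves labelled bijectively by J is
encoded by its hierarchy of clusters: every vertex other than the root is represented by the
set of leaves lying above it (i.e. whose path to the root passes through it). Leaves are the
singletons, inner vertices are the clusters with at least two elements. A forest on I is the
union of the hierarchies of its trees; its trees correspond to the maximal clusters.\<close>

definition is_forest :: "'a set \<Rightarrow> 'a set set \<Rightarrow> bool" where
  "is_forest I F \<longleftrightarrow>
     finite I \<and>
     (\<forall>C\<in>F. C \<noteq> {} \<and> C \<subseteq> I) \<and>
     (\<forall>i\<in>I. {i} \<in> F) \<and>
     (\<forall>C\<in>F. \<forall>D\<in>F. C \<subseteq> D \<or> D \<subseteq> C \<or> C \<inter> D = {}) \<and>
     (\<forall>C\<in>F. 2 \<le> card C \<longrightarrow>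
        (\<exists>A\<in>F. \<exists>B\<in>F. A \<inter> B = {} \<and> A \<union> B = C))"

definition is_tree :: "'a set \<Rightarrow> 'a set set \<Rightarrow> bool" where
  "is_tree I T \<longleftrightarrow> is_forest I T \<and> I \<noteq> {} \<and> I \<in> T"

definition inner :: "'a set set \<Rightarrow> 'a set set" where
  "inner F = {C \<in> F. 2 \<le> card C}"

definition children :: "'a set set \<Rightarrow> 'a set \<Rightarrow> 'a set set" where
  "children F C = {A \<in> F. A \<subset> C \<and> \<not> (\<exists>D\<in>F. A \<subset> D \<and> D \<subset> C)}"

text \<open>A map F \<rightarrow> G satisfying (D1)-(D4), recorded by its action on the non-root vertices
(leaves and inner vertices); edges are mapped onto the unique tree paths between the images
and root edges upwards. (D1): monotone w.r.t. the ancestor relation (= inclusion of clusters);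
(D2): inner vertices go injectively to inner vertices; (D3): identity on leaves;
(D4): injective on each tree, i.e. each edge is mapped onto a nondegenerate path and the two
edge-paths below the image of an inner vertex meet only in that image.\<close>
definition forest_morphism ::
  "'a set \<Rightarrow> 'a set set \<Rightarrow> 'a set set \<Rightarrow> ('a set \<Rightarrow> 'a set) \<Rightarrow> bool" where
  "forest_morphism I F G \<phi> \<longleftrightarrow>
     (\<forall>C\<in>F. \<phi> C \<in> G) \<and>
     (\<forall>C\<in>F. \<forall>C'\<in>F. C \<subseteq> C' \<longrightarrow> \<phi> C \<subseteq> \<phi> C') \<and>
     (\<forall>C\<in>inner F. \<phi> C \<in> inner G) \<and> inj_on \<phi> (inner F) \<and>
     (\<forall>i\<in>I. \<phi> {i} = {i}) \<and>
     (\<forall>C\<in>inner F. \<forall>A\<in>children F C. \<phi> A \<subset> \<phi> C) \<and>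
     (\<forall>C\<in>inner F. \<forall>A\<in>children F C. \<forall>B\<in>children F C. A \<noteq> B \<longrightarrow>
        \<not> (\<exists>D\<in>G. \<phi> A \<union> \<phi> B \<subseteq> D \<and> D \<subset> \<phi> C))"

definition forest_le :: "'a set \<Rightarrow> 'a set set \<Rightarrow> 'a set set \<Rightarrow> bool" where
  "forest_le I F G \<longleftrightarrow> is_forest I F \<and> is_forest I G \<and> (\<exists>\<phi>. forest_morphism I F G \<phi>)"

definition atom :: "'a set \<Rightarrow> 'a \<Rightarrow> 'a \<Rightarrow> 'a set set" where
  "atom I i j = {{x} | x. x \<in> I} \<union> {{i, j}}"

text \<open>v_(i,j): the vertex of T where the paths from i and j to the root meet, i.e. the
smallest cluster containing both.\<close>
definition vtx :: "'a set set \<Rightarrow> 'a \<Rightarrow> 'a \<Rightarrow> 'a set" where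
  "vtx T i j = \<Inter> {D \<in> T. i \<in> D \<and> j \<in> D}"

definition is_join_below ::
  "'a set \<Rightarrow> 'a set set \<Rightarrow> ('b \<Rightarrow> 'a set set) \<Rightarrow> 'b set \<Rightarrow> 'a set set \<Rightarrow> bool" where
  "is_join_below I T a M F \<longleftrightarrow>
     forest_le I F T \<and> (\<forall>m\<in>M. forest_le I (a m) F) \<and>
     (\<forall>G. forest_le I G T \<and> (\<forall>m\<in>M. forest_le I (a m) G) \<longrightarrow> forest_le I F G)"

end

theory Submission
  imports Defs "HOL.Hull"
begin

text \<open>The join is constructed explicitly. For the atom \<open>m\<close> with vertex \<open>v\<^sub>m\<close>, let \<open>C\<^sub>m\<close> be
  the set of leaves connected to \<open>p\<^sub>m\<close> by a chain of atom pairs \<open>(p\<^sub>n, q\<^sub>n)\<close> whose vertices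
  \<open>v\<^sub>n\<close> lie below \<open>v\<^sub>m\<close>. The singletons together with the sets \<open>C\<^sub>m\<close> form a forest whose
  inner vertices are the \<open>C\<^sub>m\<close>. If \<open>G \<le> T\<close> lies above all atoms, condition (D4) forces every
  morphism \<open>G \<rightarrow> T\<close> to send the smallest cluster \<open>g\<^sub>m\<close> of \<open>G\<close> containing \<open>p\<^sub>m\<close> and \<open>q\<^sub>m\<close>
  to \<open>v\<^sub>m\<close>. Hence the \<open>g\<^sub>m\<close> are pairwise distinct, \<open>C\<^sub>m \<subseteq> g\<^sub>m\<close>, and taking smallest enclosing
  clusters is a morphism from the constructed forest to \<open>G\<close>, which is therefore the join. For any
  join \<open>F\<close> with a morphism \<open>\<phi> : F \<rightarrow> T\<close>, the \<open>g\<^sub>m\<close> are \<open>k\<close> distinct inner vertices of \<open>F\<close> with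
  \<open>\<phi> g\<^sub>m = v\<^sub>m\<close>, while \<open>F\<close> lies below the constructed forest and so has at most \<open>k\<close> inner
  vertices.\<close>

section \<open>Forests and smallest enclosing clusters\<close>

abbreviation cluster_hull :: "'a set set \<Rightarrow> 'a set \<Rightarrow> 'a set" where
  "cluster_hull G C \<equiv> (\<lambda>D. D \<in> G) hull C"

lemma forest_finite_leaves: "is_forest I F \<Longrightarrow> finite I"
  unfolding is_forest_def by simp

lemma forest_finite: "is_forest I F \<Longrightarrow> finite F"
  unfolding is_forest_def by (meson PowI finite_Pow_iff finite_subset subsetI)

lemma forest_cluster_subset: "is_forest I F \<Longrightarrow> C \<in> F \<Longrightarrow> C \<subseteq> I"
  unfolding is_forest_def by simp

lemma forest_cluster_nonempty: "is_forest I F \<Longrightarrow> C \<in> F \<Longrightarrow> C \<noteq> {}"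
  unfolding is_forest_def by simp

lemma forest_cluster_finite: "is_forest I F \<Longrightarrow> C \<in> F \<Longrightarrow> finite C"
  using forest_cluster_subset forest_finite_leaves finite_subset by metis

lemma forest_singleton: "is_forest I F \<Longrightarrow> i \<in> I \<Longrightarrow> {i} \<in> F"
  unfolding is_forest_def by simp

lemma forest_laminar:
  "is_forest I F \<Longrightarrow> C \<in> F \<Longrightarrow> D \<in> F \<Longrightarrow> C \<subseteq> D \<or> D \<subseteq> C \<or> C \<inter> D = {}"
  unfolding is_forest_def by blast

lemma forest_overlap:
  "is_forest I F \<Longrightarrow> C \<in> F \<Longrightarrow> D \<in> F \<Longrightarrow> C \<inter> D \<noteq> {} \<Longrightarrow> C \<subseteq> D \<or> D \<subseteq> C"
  using forest_laminar by blast

lemma forest_split: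
  assumes "is_forest I F" "C \<in> inner F"
  obtains A B where "A \<in> F" "B \<in> F" "A \<inter> B = {}" "A \<union> B = C"
proof -
  have "\<exists>A\<in>F. \<exists>B\<in>F. A \<inter> B = {} \<and> A \<union> B = C"
    using assms unfolding is_forest_def inner_def by blast
  then show thesis using that by blast
qed

lemma mem_innerI:
  assumes "is_forest I F" "C \<in> F" "x \<in> C" "y \<in> C" "x \<noteq> y"
  shows "C \<in> inner F"
proof -
  have "card {x, y} \<le> card C"
    using assms by (intro card_mono forest_cluster_finite) auto
  then show ?thesis using assms(2,5) unfolding inner_def by simp
qed

lemma cluster_hull_subset: "C \<subseteq> cluster_hull F C"
  by (rule hull_subset)

lemma cluster_hull_least: "D \<in> F \<Longrightarrow> C \<subseteq> D \<Longrightarrow> cluster_hull F C \<subseteq> D"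
  by (rule hull_minimal)

lemma cluster_hull_mem:
  assumes F: "is_forest I F" and "C \<noteq> {}" "D \<in> F" "C \<subseteq> D"
  shows "cluster_hull F C \<in> F"
proof -
  let ?Ds = "{D \<in> F. C \<subseteq> D}"
  have "subset.chain F ?Ds"
    using forest_laminar[OF F] \<open>C \<noteq> {}\<close> unfolding subset_chain_def by blast
  then have "\<Inter>?Ds \<in> ?Ds"
    using forest_finite[OF F] assms(3,4) by (intro Inter_in_chain) auto
  then show ?thesis by (simp add: hull_def)
qed

lemma cluster_hull_singleton: "is_forest I F \<Longrightarrow> i \<in> I \<Longrightarrow> cluster_hull F {i} = {i}"
  by (simp add: hull_same forest_singleton)

lemma vtx_eq_cluster_hull: "vtx T i j = cluster_hull T {i, j}"
  unfolding vtx_def hull_def by (rule arg_cong[where f = Inter]) auto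

lemma forest_subcluster_in_part:
  assumes F: "is_forest I F" and split: "A \<in> F" "B \<in> F" "A \<inter> B = {}" "A \<union> B = C"
    and D: "D \<in> F" "D \<subset> C" "D \<inter> A \<noteq> {}"
  shows "D \<subseteq> A"
  using forest_laminar[OF F D(1) split(1)] forest_laminar[OF F D(1) split(2)] split D by blast

lemma split_part_child:
  assumes F: "is_forest I F" and split: "A \<in> F" "B \<in> F" "A \<inter> B = {}" "A \<union> B = C"
  shows "A \<in> children F C"
  unfolding children_def
proof (intro CollectI conjI notI)
  have "A \<noteq> {}" "B \<noteq> {}" using split forest_cluster_nonempty[OF F] by auto
  then show "A \<in> F" "A \<subset> C" using split by auto
  assume "\<exists>D\<in>F. A \<subset> D \<and> D \<subset> C"
  then obtain D where D: "D \<in> F" "A \<subset> D" "D \<subset> C" by blast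
  then have "D \<inter> A \<noteq> {}" using \<open>A \<noteq> {}\<close> by auto
  then have "D \<subseteq> A" using forest_subcluster_in_part[OF F split D(1,3)] by blast
  then show False using D(2) by auto
qed

lemma child_eq_split_part:
  assumes F: "is_forest I F" and split: "A \<in> F" "B \<in> F" "A \<inter> B = {}" "A \<union> B = C"
    and X: "X \<in> children F C" "X \<inter> A \<noteq> {}"
  shows "X = A"
proof -
  have X': "X \<in> F" "X \<subset> C" "\<not> (\<exists>D\<in>F. X \<subset> D \<and> D \<subset> C)"
    using X(1) unfolding children_def by auto
  have "X \<subseteq> A" using forest_subcluster_in_part[OF F split X'(1,2) X(2)] .
  moreover have "A \<subset> C" using split_part_child[OF F split] unfolding children_def by blast
  ultimately show ?thesis using X'(3) split(1) by blast
qed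

lemma children_of_split:
  assumes F: "is_forest I F" and split: "A \<in> F" "B \<in> F" "A \<inter> B = {}" "A \<union> B = C"
  shows "children F C = {A, B}"
proof
  have split': "B \<in> F" "A \<in> F" "B \<inter> A = {}" "B \<union> A = C" using split by auto
  show "{A, B} \<subseteq> children F C"
    using split_part_child[OF F split] split_part_child[OF F split'] by blast
  show "children F C \<subseteq> {A, B}"
  proof
    fix X assume X: "X \<in> children F C"
    then have "X \<noteq> {}" "X \<subseteq> C"
      using forest_cluster_nonempty[OF F] unfolding children_def by auto
    then have "X \<inter> A \<noteq> {} \<or> X \<inter> B \<noteq> {}" using split(4) by blast
    then show "X \<in> {A, B}"
      using child_eq_split_part[OF F split X] child_eq_split_part[OF F split' X] by blast
  qed
qed

lemma children_union:
  assumes F: "is_forest I F" and "C \<in> inner F"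
    and "A \<in> children F C" "B \<in> children F C" "A \<noteq> B"
  shows "A \<union> B = C"
proof -
  obtain A' B' where split: "A' \<in> F" "B' \<in> F" "A' \<inter> B' = {}" "A' \<union> B' = C"
    using forest_split[OF assms(1,2)] .
  then have "A \<in> {A', B'}" "B \<in> {A', B'}"
    using children_of_split[OF F split] assms(3,4) by auto
  then show ?thesis using split(4) assms(5) by auto
qed

lemma cluster_hull_pair_split:
  assumes F: "is_forest I F" and "D \<in> F" "{x, y} \<subseteq> D" "x \<noteq> y"
  obtains A B where "A \<in> F" "B \<in> F" "A \<inter> B = {}" "A \<union> B = cluster_hull F {x, y}"
    "x \<in> A" "y \<in> B"
proof -
  let ?H = "cluster_hull F {x, y}"
  have H: "?H \<in> F" "x \<in> ?H" "y \<in> ?H"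
    using cluster_hull_mem[OF F _ assms(2,3)] cluster_hull_subset[of "{x, y}" F] by auto
  then have "?H \<in> inner F" using mem_innerI[OF F _ _ _ assms(4)] by blast
  then obtain A B where split: "A \<in> F" "B \<in> F" "A \<inter> B = {}" "A \<union> B = ?H"
    by (rule forest_split[OF F])
  have not_both: "\<not> (x \<in> X \<and> y \<in> X)" if "X \<in> F" "Y \<in> F" "X \<inter> Y = {}" "X \<union> Y = ?H"
    for X Y
  proof
    assume "x \<in> X \<and> y \<in> X"
    then have "?H \<subseteq> X" using cluster_hull_least[OF that(1)] by simp
    then show False using that(3,4) forest_cluster_nonempty[OF F that(2)] by auto
  qed
  have split': "B \<in> F" "A \<in> F" "B \<inter> A = {}" "B \<union> A = ?H" using split by auto
  consider "x \<in> A" "y \<in> B" | "x \<in> B" "y \<in> A"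
    using H(2,3) split(4) not_both[OF split] not_both[OF split'] by blast
  then show thesis using that[OF split] that[OF split'] by cases
qed

lemma cluster_hull_eq_if_none_between:
  assumes F: "is_forest I F" and clusters: "A \<in> F" "B \<in> F" "C \<in> F"
    and below: "A \<subset> C" "B \<subset> C" and x: "x \<in> A" and y: "y \<in> B"
    and none_between: "\<not> (\<exists>D\<in>F. A \<union> B \<subseteq> D \<and> D \<subset> C)"
  shows "cluster_hull F {x, y} = C"
proof -
  have "\<not> A \<subseteq> B"
  proof
    assume "A \<subseteq> B"
    then have "A \<union> B \<subseteq> B" by blast
    then show False using none_between clusters(2) below(2) by blast
  qed
  moreover have "\<not> B \<subseteq> A"
  proof
    assume "B \<subseteq> A"
    then have "A \<union> B \<subseteq> A" by blast
    then show False using none_between clusters(1) below(1) by blast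
  qed
  ultimately have disjoint: "A \<inter> B = {}" using forest_laminar[OF F clusters(1,2)] by blast
  let ?H = "cluster_hull F {x, y}"
  have xy: "{x, y} \<subseteq> C" using below x y by blast
  have H: "?H \<in> F" "?H \<subseteq> C" "x \<in> ?H" "y \<in> ?H"
    using cluster_hull_mem[OF F _ clusters(3) xy] cluster_hull_least[OF clusters(3) xy]
      cluster_hull_subset[of "{x, y}" F] by auto
  have "\<not> ?H \<subseteq> A" "\<not> ?H \<subseteq> B" using H(3,4) x y disjoint by auto
  then have "A \<union> B \<subseteq> ?H"
    using forest_overlap[OF F clusters(1) H(1)] forest_overlap[OF F clusters(2) H(1)] H(3,4) x y
    by blast
  then have "\<not> ?H \<subset> C" using none_between H(1) by blast
  then show ?thesis using H(2) by blast
qed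

section \<open>Morphisms of forests\<close>

lemma
  assumes "forest_morphism I F G \<phi>"
  shows morphism_mem: "C \<in> F \<Longrightarrow> \<phi> C \<in> G"
    and morphism_mono: "C \<in> F \<Longrightarrow> C' \<in> F \<Longrightarrow> C \<subseteq> C' \<Longrightarrow> \<phi> C \<subseteq> \<phi> C'"
    and morphism_inner: "C \<in> inner F \<Longrightarrow> \<phi> C \<in> inner G"
    and morphism_inj: "inj_on \<phi> (inner F)"
    and morphism_leaf: "i \<in> I \<Longrightarrow> \<phi> {i} = {i}"
    and morphism_child: "C \<in> inner F \<Longrightarrow> A \<in> children F C \<Longrightarrow> \<phi> A \<subset> \<phi> C"
    and morphism_children_apart: "C \<in> inner F \<Longrightarrow> A \<in> children F C \<Longrightarrow> B \<in> children F C \<Longrightarrow>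
      A \<noteq> B \<Longrightarrow> \<not> (\<exists>D\<in>G. \<phi> A \<union> \<phi> B \<subseteq> D \<and> D \<subset> \<phi> C)"
  using assms unfolding forest_morphism_def by simp_all

lemma morphism_leaf_mem:
  assumes F: "is_forest I F" and \<phi>: "forest_morphism I F G \<phi>" and "A \<in> F" "i \<in> A"
  shows "i \<in> \<phi> A"
proof -
  have "i \<in> I" using forest_cluster_subset[OF F] assms(3,4) by blast
  then have "\<phi> {i} \<subseteq> \<phi> A"
    using morphism_mono[OF \<phi> forest_singleton[OF F]] assms(3,4) by simp
  then show ?thesis using morphism_leaf[OF \<phi> \<open>i \<in> I\<close>] by simp
qed

text \<open>This is where condition (D4) enters: the images of the two children of the smallest
  cluster containing x and y leave no room for a smaller cluster of T above both.\<close>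

lemma morphism_cluster_hull_pair:
  assumes G: "is_forest I G" and T: "is_forest I T" and \<rho>: "forest_morphism I G T \<rho>"
    and "D \<in> G" "{x, y} \<subseteq> D" "x \<noteq> y"
  shows "\<rho> (cluster_hull G {x, y}) = cluster_hull T {x, y}"
proof -
  let ?C = "cluster_hull G {x, y}"
  obtain A B where split: "A \<in> G" "B \<in> G" "A \<inter> B = {}" "A \<union> B = ?C" and "x \<in> A" "y \<in> B"
    using cluster_hull_pair_split[OF G assms(4-6)] .
  have C: "?C \<in> G" "?C \<in> inner G"
    using cluster_hull_mem[OF G _ assms(4,5)] cluster_hull_subset[of "{x, y}" G] assms(6)
    by (auto intro: mem_innerI[OF G])
  have children: "A \<in> children G ?C" "B \<in> children G ?C" "A \<noteq> B"
    using children_of_split[OF G split] split(3) \<open>x \<in> A\<close> \<open>y \<in> B\<close> by auto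
  show ?thesis
  proof (rule cluster_hull_eq_if_none_between[OF T, symmetric])
    show "\<rho> A \<in> T" "\<rho> B \<in> T" "\<rho> ?C \<in> T" using morphism_mem[OF \<rho>] split C by auto
    show "\<rho> A \<subset> \<rho> ?C" "\<rho> B \<subset> \<rho> ?C" using morphism_child[OF \<rho> C(2)] children by auto
    show "x \<in> \<rho> A" "y \<in> \<rho> B"
      using morphism_leaf_mem[OF G \<rho>] split \<open>x \<in> A\<close> \<open>y \<in> B\<close> by auto
    show "\<not> (\<exists>D\<in>T. \<rho> A \<union> \<rho> B \<subseteq> D \<and> D \<subset> \<rho> ?C)"
      using morphism_children_apart[OF \<rho> C(2) children] .
  qed
qed

lemma cluster_hull_children_apart:
  assumes F: "is_forest I F" and "C \<in> inner F"
    and "A \<in> children F C" "B \<in> children F C" "A \<noteq> B"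
    and D: "D \<in> G" "cluster_hull G A \<union> cluster_hull G B \<subseteq> D"
  shows "\<not> D \<subset> cluster_hull G C"
proof -
  have "A \<union> B \<subseteq> D"
    using D(2) cluster_hull_subset[of A G] cluster_hull_subset[of B G] by blast
  then have "cluster_hull G C \<subseteq> D"
    using children_union[OF assms(1-5)] cluster_hull_least[OF D(1)] by simp
  then show ?thesis by blast
qed

lemma cluster_hull_morphism:
  assumes F: "is_forest I F" and G: "is_forest I G"
    and covered: "\<And>C. C \<in> F \<Longrightarrow> \<exists>D\<in>G. C \<subseteq> D"
    and child_strict: "\<And>C A. C \<in> inner F \<Longrightarrow> A \<in> children F C \<Longrightarrow>
      cluster_hull G A \<noteq> cluster_hull G C"
    and inj: "inj_on (cluster_hull G) (inner F)"
  shows "forest_morphism I F G (cluster_hull G)"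
proof -
  have mem: "cluster_hull G C \<in> G" if "C \<in> F" for C
    using covered[OF that] cluster_hull_mem[OF G forest_cluster_nonempty[OF F that]] by blast
  have inner: "cluster_hull G C \<in> inner G" if "C \<in> inner F" for C
  proof -
    have "C \<in> F" "2 \<le> card C" using that unfolding inner_def by auto
    moreover have "card C \<le> card (cluster_hull G C)"
      using card_mono[OF forest_cluster_finite[OF G mem] cluster_hull_subset] \<open>C \<in> F\<close> .
    ultimately show ?thesis using mem unfolding inner_def by auto
  qed
  have child: "cluster_hull G A \<subset> cluster_hull G C"
    if "C \<in> inner F" "A \<in> children F C" for C A
  proof -
    have "A \<subseteq> C" using that(2) unfolding children_def by blast
    then have "cluster_hull G A \<subseteq> cluster_hull G C" by (rule hull_mono)
    then show ?thesis using child_strict[OF that] by blast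
  qed
  have apart: "\<not> (\<exists>D\<in>G. cluster_hull G A \<union> cluster_hull G B \<subseteq> D \<and> D \<subset> cluster_hull G C)"
    if "C \<in> inner F" "A \<in> children F C" "B \<in> children F C" "A \<noteq> B" for C A B
    using cluster_hull_children_apart[OF F that] by blast
  show ?thesis
    unfolding forest_morphism_def
    using mem inner inj child apart cluster_hull_singleton[OF G] by (simp add: hull_mono)
qed

lemma forest_morphism_id:
  assumes F: "is_forest I F"
  shows "forest_morphism I F F id"
proof -
  have "A \<subset> C" if "A \<in> children F C" for C A
    using that unfolding children_def by blast
  moreover have "\<not> (\<exists>D\<in>F. A \<union> B \<subseteq> D \<and> D \<subset> C)"
    if "C \<in> inner F" "A \<in> children F C" "B \<in> children F C" "A \<noteq> B" for C A B
    using children_union[OF F that] by blast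
  ultimately show ?thesis unfolding forest_morphism_def by simp
qed

section \<open>Atoms\<close>

lemma atom_forest:
  assumes "finite I" "a \<in> I" "b \<in> I" "a \<noteq> b"
  shows "is_forest I (atom I a b)"
  unfolding is_forest_def
proof (intro conjI ballI impI)
  fix C assume C: "C \<in> atom I a b" "2 \<le> card C"
  then have "C = {a, b}" unfolding atom_def by auto
  then show "\<exists>A\<in>atom I a b. \<exists>B\<in>atom I a b. A \<inter> B = {} \<and> A \<union> B = C"
    using assms unfolding atom_def by (intro bexI[of _ "{a}"] bexI[of _ "{b}"]) auto
qed (use assms in \<open>auto simp: atom_def\<close>)

lemma inner_atom: "a \<noteq> b \<Longrightarrow> inner (atom I a b) = {{a, b}}"
  unfolding inner_def atom_def by auto

lemma atom_le_if_covered: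
  assumes G: "is_forest I G" and ab: "a \<in> I" "b \<in> I" "a \<noteq> b"
    and covered: "\<exists>D\<in>G. {a, b} \<subseteq> D"
  shows "forest_le I (atom I a b) G"
proof -
  have F: "is_forest I (atom I a b)"
    using atom_forest[OF forest_finite_leaves[OF G] ab] .
  have "forest_morphism I (atom I a b) G (cluster_hull G)"
  proof (rule cluster_hull_morphism[OF F G])
    show "\<exists>D\<in>G. C \<subseteq> D" if C: "C \<in> atom I a b" for C
    proof -
      consider "C = {a, b}" | x where "x \<in> I" "C = {x}"
        using C unfolding atom_def by blast
      then show ?thesis using covered forest_singleton[OF G] by cases auto
    qed
    show "cluster_hull G A \<noteq> cluster_hull G C"
      if "C \<in> inner (atom I a b)" "A \<in> children (atom I a b) C" for C A
    proof -
      have "C = {a, b}" using that(1) inner_atom[OF ab(3)] by blast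
      moreover have "children (atom I a b) {a, b} = {{a}, {b}}"
        by (rule children_of_split[OF F]) (use ab in \<open>auto simp: atom_def\<close>)
      ultimately have "A = {a} \<or> A = {b}" using that(2) by blast
      then have "cluster_hull G A = {a} \<or> cluster_hull G A = {b}"
        using cluster_hull_singleton[OF G ab(1)] cluster_hull_singleton[OF G ab(2)] by auto
      moreover have "{a, b} \<subseteq> cluster_hull G C"
        using cluster_hull_subset[of "{a, b}" G] \<open>C = {a, b}\<close> by simp
      ultimately show ?thesis using ab(3) by auto
    qed
    show "inj_on (cluster_hull G) (inner (atom I a b))"
      unfolding inner_atom[OF ab(3)] by simp
  qed
  then show ?thesis unfolding forest_le_def using F G by blast
qed

lemma atom_le_iff:
  assumes G: "is_forest I G" and ab: "a \<in> I" "b \<in> I" "a \<noteq> b"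
  shows "forest_le I (atom I a b) G \<longleftrightarrow> (\<exists>D\<in>G. {a, b} \<subseteq> D)"
proof
  assume "forest_le I (atom I a b) G"
  then obtain \<alpha> where \<alpha>: "forest_morphism I (atom I a b) G \<alpha>"
    unfolding forest_le_def by blast
  have F: "is_forest I (atom I a b)"
    using atom_forest[OF forest_finite_leaves[OF G] ab] .
  have ab_atom: "{a, b} \<in> atom I a b" unfolding atom_def by simp
  show "\<exists>D\<in>G. {a, b} \<subseteq> D"
    using morphism_mem[OF \<alpha> ab_atom] morphism_leaf_mem[OF F \<alpha> ab_atom] by blast
qed (rule atom_le_if_covered[OF assms])

section \<open>Connected components of symmetric relations\<close>

lemma rtrancl_Image_subset:
  assumes "x \<in> S" and closed: "\<And>y z. y \<in> S \<Longrightarrow> (y, z) \<in> R \<Longrightarrow> z \<in> S"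
  shows "R\<^sup>* `` {x} \<subseteq> S"
proof -
  have "R\<^sup>* `` {x} \<subseteq> R\<^sup>* `` S" using \<open>x \<in> S\<close> by (intro Image_mono) auto
  also have "\<dots> = S" using closed by (intro Image_closed_trancl) blast
  finally show ?thesis .
qed

lemma sym_rtrancl_Image_eq:
  assumes "sym R" "y \<in> R\<^sup>* `` {x}"
  shows "R\<^sup>* `` {y} = R\<^sup>* `` {x}"
proof -
  have "equiv UNIV (R\<^sup>*)"
    by (simp add: equiv_def refl_rtrancl sym_rtrancl[OF assms(1)] trans_rtrancl)
  moreover have "(y, x) \<in> R\<^sup>*"
    using assms sym_rtrancl unfolding sym_def by blast
  ultimately show ?thesis by (rule equiv_class_eq)
qed

lemma sym_rtrancl_Image_crossing:
  assumes "sym R" and K: "K = R\<^sup>* `` {x}" and "K \<inter> S \<noteq> {}" "K - S \<noteq> {}"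
  obtains a b where "(a, b) \<in> R" "a \<in> K \<inter> S" "b \<in> K - S"
proof -
  have step: "z \<in> K" if "y \<in> K" "(y, z) \<in> R" for y z
    using that K by (auto intro: rtrancl_into_rtrancl)
  have "\<exists>a b. (a, b) \<in> R \<and> a \<in> K \<inter> S \<and> b \<in> K - S"
  proof (rule ccontr)
    assume none: "\<not> ?thesis"
    have "z \<in> S \<longleftrightarrow> y \<in> S" if "y \<in> K" "(y, z) \<in> R" for y z
      using none step[OF that] that \<open>sym R\<close> unfolding sym_def by blast
    then have "K \<subseteq> K \<inter> S \<or> K \<subseteq> K - S"
      using rtrancl_Image_subset[of x "K \<inter> S" R] rtrancl_Image_subset[of x "K - S" R] step K
      by (cases "x \<in> S") auto
    then show False using assms(3,4) by blast
  qed
  then show thesis using that by blast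
qed

section \<open>The join of atoms with distinct vertices\<close>

locale distinct_vertex_atoms =
  fixes I :: "'a set" and T :: "'a set set" and k :: nat and p q :: "nat \<Rightarrow> 'a"
  assumes tree: "is_tree I T"
    and atoms: "\<forall>m\<in>{1..k}. p m \<in> I \<and> q m \<in> I \<and> p m \<noteq> q m"
    and vertices_inj: "inj_on (\<lambda>m. vtx T (p m) (q m)) {1..k}"
begin

definition vert :: "nat \<Rightarrow> 'a set" where
  "vert m = vtx T (p m) (q m)"

definition atom_edges :: "'a set \<Rightarrow> ('a \<times> 'a) set" where
  "atom_edges D = {(x, y). \<exists>n\<in>{1..k}. vert n \<subseteq> D \<and> {x, y} = {p n, q n}}"

definition component :: "'a set \<Rightarrow> 'a \<Rightarrow> 'a set" where
  "component D x = (atom_edges D)\<^sup>* `` {x}"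

definition join_cluster :: "nat \<Rightarrow> 'a set" where
  "join_cluster m = component (vert m) (p m)"

definition join_forest :: "'a set set" where
  "join_forest = {{i} | i. i \<in> I} \<union> join_cluster ` {1..k}"

lemma forest_T: "is_forest I T"
  using tree unfolding is_tree_def by simp

lemma leaves_in_T: "I \<in> T"
  using tree unfolding is_tree_def by simp

lemma atom_leaves:
  assumes "m \<in> {1..k}"
  shows "p m \<in> I" "q m \<in> I" "p m \<noteq> q m"
  using atoms assms by auto

lemma vert_eq_hull: "vert m = cluster_hull T {p m, q m}"
  unfolding vert_def by (rule vtx_eq_cluster_hull)

lemma atom_in_vert: "{p m, q m} \<subseteq> vert m"
  unfolding vert_eq_hull by (rule cluster_hull_subset)

lemma vert_least: "X \<in> T \<Longrightarrow> {p m, q m} \<subseteq> X \<Longrightarrow> vert m \<subseteq> X"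
  unfolding vert_eq_hull by (rule cluster_hull_least)

lemma vert_mem: "m \<in> {1..k} \<Longrightarrow> vert m \<in> T"
  unfolding vert_eq_hull using atom_leaves
  by (intro cluster_hull_mem[OF forest_T _ leaves_in_T]) auto

lemma vert_inject: "m \<in> {1..k} \<Longrightarrow> n \<in> {1..k} \<Longrightarrow> vert m = vert n \<longleftrightarrow> m = n"
  using vertices_inj unfolding vert_def inj_on_def by blast

lemma atom_edgesE:
  assumes "(x, y) \<in> atom_edges D"
  obtains n where "n \<in> {1..k}" "vert n \<subseteq> D" "{x, y} = {p n, q n}"
  using assms unfolding atom_edges_def by blast

lemma atom_edge_below:
  "n \<in> {1..k} \<Longrightarrow> vert n \<subseteq> D \<Longrightarrow> {x, y} = {p n, q n} \<Longrightarrow> (x, y) \<in> atom_edges D"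
  unfolding atom_edges_def by blast

lemma atom_edge_subset: "(x, y) \<in> atom_edges D \<Longrightarrow> {x, y} \<subseteq> D"
  by (erule atom_edgesE) (metis atom_in_vert subset_trans)

lemma sym_atom_edges: "sym (atom_edges D)"
  unfolding atom_edges_def sym_def by (auto simp: insert_commute)

lemma atom_edges_mono: "D \<subseteq> D' \<Longrightarrow> atom_edges D \<subseteq> atom_edges D'"
  unfolding atom_edges_def by blast

lemma self_in_component: "x \<in> component D x"
  unfolding component_def by simp

lemma component_step: "y \<in> component D x \<Longrightarrow> (y, z) \<in> atom_edges D \<Longrightarrow> z \<in> component D x"
  unfolding component_def by (auto intro: rtrancl_into_rtrancl)

lemma component_subsetI:
  "x \<in> S \<Longrightarrow> (\<And>y z. y \<in> S \<Longrightarrow> (y, z) \<in> atom_edges D \<Longrightarrow> z \<in> S) \<Longrightarrow> component D x \<subseteq> S"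
  unfolding component_def by (rule rtrancl_Image_subset)

lemma component_subset: "x \<in> D \<Longrightarrow> component D x \<subseteq> D"
  by (rule component_subsetI) (auto dest: atom_edge_subset)

lemma component_mono: "D \<subseteq> D' \<Longrightarrow> component D x \<subseteq> component D' x"
  unfolding component_def using rtrancl_mono[OF atom_edges_mono] by blast

lemma component_eq: "y \<in> component D x \<Longrightarrow> component D y = component D x"
  unfolding component_def by (rule sym_rtrancl_Image_eq[OF sym_atom_edges])

lemma component_nested:
  assumes "D \<subseteq> D'" "z \<in> component D x" "z \<in> component D' y"
  shows "component D x \<subseteq> component D' y"
  using component_mono[OF assms(1), of z] component_eq assms(2,3) by metis

lemma component_restrict:
  assumes H: "H \<in> T" "H \<subseteq> D" and sub: "component D x \<subseteq> H"
  shows "component D x = component H x"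
proof
  show "component H x \<subseteq> component D x" using component_mono[OF H(2)] .
  show "component D x \<subseteq> component H x"
  proof (rule component_subsetI)
    fix y z assume y: "y \<in> component H x" and yz: "(y, z) \<in> atom_edges D"
    have "y \<in> component D x" using y component_mono[OF H(2)] by blast
    then have "{y, z} \<subseteq> H" using component_step[OF _ yz] sub by blast
    moreover obtain n where n: "n \<in> {1..k}" "{y, z} = {p n, q n}" using yz by (rule atom_edgesE)
    ultimately have "vert n \<subseteq> H" using vert_least[OF H(1)] by simp
    then have "(y, z) \<in> atom_edges H" using atom_edge_below n by blast
    then show "z \<in> component H x" by (rule component_step[OF y])
  qed (rule self_in_component)
qed

lemma component_hull:
  assumes "D \<in> T" "x \<in> D"
  shows "cluster_hull T (component D x) \<in> T" "cluster_hull T (component D x) \<subseteq> D"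
  using cluster_hull_mem[OF forest_T _ assms(1) component_subset[OF assms(2)]]
    cluster_hull_least[OF assms(1) component_subset[OF assms(2)]] self_in_component[of x D]
  by auto

text \<open>The hull of a nontrivial component splits into two parts, and an atom edge of the component
  crossing the split has its vertex at the hull.\<close>

lemma nontrivial_component_hull_vert:
  assumes D: "D \<in> T" "x \<in> D" and nontrivial: "component D x \<noteq> {x}"
  obtains n where "n \<in> {1..k}" "p n \<in> component D x" "vert n = cluster_hull T (component D x)"
proof -
  let ?K = "component D x"
  let ?H = "cluster_hull T ?K"
  have x: "x \<in> ?K" by (rule self_in_component)
  then obtain y where y: "y \<in> ?K" "y \<noteq> x" using nontrivial by blast
  have H: "?H \<in> T" "?K \<subseteq> ?H" using component_hull(1)[OF D] cluster_hull_subset .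
  have "y \<in> ?H" "x \<in> ?H" using H(2) x y(1) by blast+
  then have "?H \<in> inner T" by (rule mem_innerI[OF forest_T H(1) _ _ y(2)])
  then obtain H1 H2 where split: "H1 \<in> T" "H2 \<in> T" "H1 \<inter> H2 = {}" "H1 \<union> H2 = ?H"
    by (rule forest_split[OF forest_T])
  have "H1 \<noteq> {}" "H2 \<noteq> {}"
    using forest_cluster_nonempty[OF forest_T] split(1,2) by auto
  then have below: "H1 \<subset> ?H" "H2 \<subset> ?H" using split(3,4) by blast+
  have "\<not> ?K \<subseteq> X" if X: "X \<in> T" "X \<subset> ?H" for X
  proof
    assume "?K \<subseteq> X"
    then have "?H \<subseteq> X" by (rule cluster_hull_least[OF X(1)])
    then show False using X(2) by blast
  qed
  then have "\<not> ?K \<subseteq> H1" "\<not> ?K \<subseteq> H2" using split(1,2) below by blast+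
  then have "?K \<inter> H1 \<noteq> {}" "?K - H1 \<noteq> {}" using H(2) split(4) by blast+
  then obtain a b where ab: "(a, b) \<in> atom_edges D" "a \<in> ?K \<inter> H1" "b \<in> ?K - H1"
    by (rule sym_rtrancl_Image_crossing[OF sym_atom_edges component_def])
  from ab(1) obtain n where n: "n \<in> {1..k}" "vert n \<subseteq> D" "{a, b} = {p n, q n}"
    by (rule atom_edgesE)
  have "a \<in> H1" "b \<in> H2" using ab(2,3) H(2) split(4) by blast+
  moreover have "\<not> (\<exists>D\<in>T. H1 \<union> H2 \<subseteq> D \<and> D \<subset> ?H)" using split(4) by blast
  ultimately have "cluster_hull T {a, b} = ?H"
    using below by (intro cluster_hull_eq_if_none_between[OF forest_T split(1,2) H(1)])
  then have "vert n = ?H" using n(3) vert_eq_hull by simp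
  moreover have "{a, b} \<subseteq> ?K" using ab(2,3) by blast
  ultimately show thesis using that[OF n(1)] n(3) by simp
qed

lemma component_trivial_or_join_cluster:
  assumes D: "D \<in> T" "x \<in> D" and nontrivial: "component D x \<noteq> {x}"
  obtains n where "n \<in> {1..k}" "component D x = join_cluster n"
proof -
  let ?K = "component D x"
  let ?H = "cluster_hull T ?K"
  obtain n where n: "n \<in> {1..k}" "p n \<in> ?K" "vert n = ?H"
    using nontrivial_component_hull_vert[OF assms] .
  have restrict: "?K = component ?H x"
    using component_restrict[OF component_hull[OF D] cluster_hull_subset] .
  also have "\<dots> = component ?H (p n)"
  proof -
    have "p n \<in> component ?H x" using n(2) unfolding restrict[symmetric] .
    then show ?thesis by (rule component_eq[symmetric])
  qed
  finally show thesis using that[OF n(1)] n(3) unfolding join_cluster_def by simp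
qed

lemma component_in_join_forest:
  assumes "D \<in> T" "x \<in> D"
  shows "component D x \<in> join_forest"
proof (cases "component D x = {x}")
  case True
  have "x \<in> I" using forest_cluster_subset[OF forest_T assms(1)] assms(2) by blast
  then show ?thesis using True unfolding join_forest_def by blast
next
  case False
  then obtain n where "n \<in> {1..k}" "component D x = join_cluster n"
    by (rule component_trivial_or_join_cluster[OF assms])
  then show ?thesis unfolding join_forest_def by blast
qed

lemma atom_in_join_cluster:
  assumes "m \<in> {1..k}"
  shows "{p m, q m} \<subseteq> join_cluster m"
proof -
  have "q m \<in> component (vert m) (p m)"
    by (rule component_step[OF self_in_component atom_edge_below[OF assms order_refl refl]])
  then show ?thesis unfolding join_cluster_def using self_in_component by simp
qed

lemma join_cluster_subset_vert: "join_cluster m \<subseteq> vert m"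
  unfolding join_cluster_def by (rule component_subset) (use atom_in_vert in blast)

lemma join_cluster_laminar:
  assumes m: "m \<in> {1..k}" and n: "n \<in> {1..k}" and z: "z \<in> join_cluster m" "z \<in> join_cluster n"
  shows "join_cluster m \<subseteq> join_cluster n \<or> join_cluster n \<subseteq> join_cluster m"
proof -
  have "vert m \<inter> vert n \<noteq> {}" using z join_cluster_subset_vert by blast
  then have "vert m \<subseteq> vert n \<or> vert n \<subseteq> vert m"
    by (rule forest_overlap[OF forest_T vert_mem[OF m] vert_mem[OF n]])
  then show ?thesis
    using component_nested[of "vert m" "vert n" z "p m" "p n"]
      component_nested[of "vert n" "vert m" z "p n" "p m"] z
    unfolding join_cluster_def by blast
qed

lemma atom_edges_vert_split:
  assumes m: "m \<in> {1..k}" and split: "A \<in> T" "B \<in> T" "A \<inter> B = {}" "A \<union> B = vert m"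
  shows "atom_edges (vert m) = atom_edges A \<union> atom_edges B \<union> {(p m, q m), (q m, p m)}"
proof
  have "A \<subseteq> vert m" "B \<subseteq> vert m" using split(4) by blast+
  moreover have "(p m, q m) \<in> atom_edges (vert m)" "(q m, p m) \<in> atom_edges (vert m)"
    using atom_edge_below[OF m order_refl] by auto
  ultimately show "atom_edges A \<union> atom_edges B \<union> {(p m, q m), (q m, p m)} \<subseteq> atom_edges (vert m)"
    using atom_edges_mono by blast
  show "atom_edges (vert m) \<subseteq> atom_edges A \<union> atom_edges B \<union> {(p m, q m), (q m, p m)}"
  proof
    fix e assume e: "e \<in> atom_edges (vert m)"
    obtain x y where xy: "e = (x, y)" by (cases e)
    from e obtain n where n: "n \<in> {1..k}" "vert n \<subseteq> vert m" "{x, y} = {p n, q n}"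
      unfolding xy by (rule atom_edgesE)
    show "e \<in> atom_edges A \<union> atom_edges B \<union> {(p m, q m), (q m, p m)}"
    proof (cases "n = m")
      case True
      then show ?thesis using xy n(3) by (auto simp: doubleton_eq_iff)
    next
      case False
      then have below: "vert n \<subset> vert m" using n(2) vert_inject[OF n(1) m] by blast
      have split': "B \<in> T" "A \<in> T" "B \<inter> A = {}" "B \<union> A = vert m" using split by auto
      have "vert n \<noteq> {}" using atom_in_vert by blast
      then have "vert n \<inter> A \<noteq> {} \<or> vert n \<inter> B \<noteq> {}" using n(2) split(4) by blast
      then have "vert n \<subseteq> A \<or> vert n \<subseteq> B"
        using forest_subcluster_in_part[OF forest_T split vert_mem[OF n(1)] below]
          forest_subcluster_in_part[OF forest_T split' vert_mem[OF n(1)] below] by blast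
      then show ?thesis using atom_edge_below[OF n(1) _ n(3)] xy by blast
    qed
  qed
qed

lemma join_cluster_eq_union:
  assumes m: "m \<in> {1..k}" and split: "A \<in> T" "B \<in> T" "A \<inter> B = {}" "A \<union> B = vert m"
    and pq: "p m \<in> A" "q m \<in> B"
  shows "join_cluster m = component A (p m) \<union> component B (q m)"
proof
  let ?A = "component A (p m)" and ?B = "component B (q m)"
  have parts: "?A \<subseteq> A" "?B \<subseteq> B" using component_subset pq by blast+
  show "join_cluster m \<subseteq> ?A \<union> ?B"
    unfolding join_cluster_def
  proof (rule component_subsetI)
    show "p m \<in> ?A \<union> ?B" using self_in_component by blast
    fix y z assume y: "y \<in> ?A \<union> ?B" and "(y, z) \<in> atom_edges (vert m)"
    then consider "(y, z) \<in> atom_edges A" | "(y, z) \<in> atom_edges B" | "z \<in> {p m, q m}"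
      unfolding atom_edges_vert_split[OF m split] by blast
    then show "z \<in> ?A \<union> ?B"
    proof cases
      case 1
      then have "y \<in> ?A" using y parts split(3) atom_edge_subset by blast
      then show ?thesis using component_step[OF _ 1] by blast
    next
      case 2
      then have "y \<in> ?B" using y parts split(3) atom_edge_subset by blast
      then show ?thesis using component_step[OF _ 2] by blast
    qed (use self_in_component in blast)
  qed
  have "?A \<subseteq> join_cluster m" "?B \<subseteq> component (vert m) (q m)"
    unfolding join_cluster_def using component_mono split(4) by blast+
  moreover have "component (vert m) (q m) = join_cluster m"
    using component_eq atom_in_join_cluster[OF m] unfolding join_cluster_def by blast
  ultimately show "?A \<union> ?B \<subseteq> join_cluster m" by blast
qed

lemma join_cluster_split:
  assumes m: "m \<in> {1..k}"
  obtains A B where "A \<in> join_forest" "B \<in> join_forest" "A \<inter> B = {}"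
    "A \<union> B = join_cluster m"
proof -
  obtain A B where split: "A \<in> T" "B \<in> T" "A \<inter> B = {}" "A \<union> B = vert m"
    and pq: "p m \<in> A" "q m \<in> B"
    using cluster_hull_pair_split[OF forest_T leaves_in_T _ atom_leaves(3)[OF m]] atom_leaves[OF m]
    unfolding vert_eq_hull by blast
  have "component A (p m) \<in> join_forest" "component B (q m) \<in> join_forest"
    using component_in_join_forest split(1,2) pq by blast+
  moreover have "component A (p m) \<inter> component B (q m) = {}"
    using component_subset[OF pq(1)] component_subset[OF pq(2)] split(3) by blast
  ultimately show thesis using that join_cluster_eq_union[OF m split pq] by blast
qed

lemma join_forestE:
  assumes "C \<in> join_forest"
  obtains i where "i \<in> I" "C = {i}" | m where "m \<in> {1..k}" "C = join_cluster m"
  using assms unfolding join_forest_def by blast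

lemma join_cluster_subset_leaves: "m \<in> {1..k} \<Longrightarrow> join_cluster m \<subseteq> I"
  using join_cluster_subset_vert forest_cluster_subset[OF forest_T vert_mem] by blast

lemma join_forest_is_forest: "is_forest I join_forest"
  unfolding is_forest_def
proof (intro conjI ballI impI)
  show "finite I" using forest_finite_leaves[OF forest_T] .
  show "{i} \<in> join_forest" if "i \<in> I" for i
    using that unfolding join_forest_def by blast
  fix C assume C: "C \<in> join_forest"
  then show "C \<noteq> {}" "C \<subseteq> I"
    by (cases rule: join_forestE; use atom_in_join_cluster join_cluster_subset_leaves in auto)+
  show "\<exists>A\<in>join_forest. \<exists>B\<in>join_forest. A \<inter> B = {} \<and> A \<union> B = C" if "2 \<le> card C"
    using C
  proof (cases rule: join_forestE)
    case (2 m)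
    then obtain A B where "A \<in> join_forest" "B \<in> join_forest" "A \<inter> B = {}" "A \<union> B = C"
      using join_cluster_split by metis
    then show ?thesis by blast
  qed (use that in auto)
  fix D assume D: "D \<in> join_forest"
  show "C \<subseteq> D \<or> D \<subseteq> C \<or> C \<inter> D = {}"
    using C D
  proof (cases rule: join_forestE)
    case (2 m)
    from D show ?thesis
    proof (cases rule: join_forestE)
      case (2 n)
      then show ?thesis using join_cluster_laminar \<open>m \<in> {1..k}\<close> \<open>C = join_cluster m\<close> by blast
    qed auto
  qed auto
qed

lemma inner_join_forest: "inner join_forest \<subseteq> join_cluster ` {1..k}"
proof
  fix C assume "C \<in> inner join_forest"
  then have "C \<in> join_forest" "2 \<le> card C" unfolding inner_def by auto
  then show "C \<in> join_cluster ` {1..k}" by (cases rule: join_forestE) auto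
qed

context
  fixes G :: "'a set set" and \<rho> :: "'a set \<Rightarrow> 'a set"
  assumes forest_G: "is_forest I G" and \<rho>: "forest_morphism I G T \<rho>"
    and atoms_below: "\<And>m. m \<in> {1..k} \<Longrightarrow> forest_le I (atom I (p m) (q m)) G"
begin

lemma atom_hull_mem:
  assumes m: "m \<in> {1..k}"
  shows "cluster_hull G {p m, q m} \<in> G"
proof -
  have "\<exists>D\<in>G. {p m, q m} \<subseteq> D"
    using atoms_below[OF m] unfolding atom_le_iff[OF forest_G atom_leaves[OF m]] .
  then obtain D where "D \<in> G" "{p m, q m} \<subseteq> D" ..
  then show ?thesis using cluster_hull_mem[OF forest_G] by simp
qed

lemma atom_hull_inner: "m \<in> {1..k} \<Longrightarrow> cluster_hull G {p m, q m} \<in> inner G"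
  by (rule mem_innerI[OF forest_G atom_hull_mem _ _ atom_leaves(3)])
    (use cluster_hull_subset[of "{p m, q m}" G] in auto)

lemma morphism_atom_hull: "m \<in> {1..k} \<Longrightarrow> \<rho> (cluster_hull G {p m, q m}) = vert m"
  unfolding vert_eq_hull
  by (rule morphism_cluster_hull_pair[OF forest_G forest_T \<rho> atom_hull_mem cluster_hull_subset
        atom_leaves(3)])

lemma atom_hull_inject:
  assumes "m \<in> {1..k}" "n \<in> {1..k}"
  shows "cluster_hull G {p m, q m} = cluster_hull G {p n, q n} \<longleftrightarrow> m = n"
proof
  assume "cluster_hull G {p m, q m} = cluster_hull G {p n, q n}"
  then have "vert m = vert n" using morphism_atom_hull assms by metis
  then show "m = n" using vert_inject[OF assms] by simp
qed simp

lemma join_cluster_subset_atom_hull: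
  assumes m: "m \<in> {1..k}"
  shows "join_cluster m \<subseteq> cluster_hull G {p m, q m}"
  unfolding join_cluster_def
proof (rule component_subsetI)
  let ?g = "\<lambda>n. cluster_hull G {p n, q n}"
  show "p m \<in> ?g m" using cluster_hull_subset[of "{p m, q m}" G] by simp
  fix y z assume y: "y \<in> ?g m" and yz: "(y, z) \<in> atom_edges (vert m)"
  from yz obtain n where n: "n \<in> {1..k}" "vert n \<subseteq> vert m" "{y, z} = {p n, q n}"
    by (rule atom_edgesE)
  then have yz_n: "{y, z} \<subseteq> ?g n" using cluster_hull_subset[of "{p n, q n}" G] by simp
  then have "?g n \<subseteq> ?g m \<or> ?g m \<subseteq> ?g n"
    using forest_overlap[OF forest_G atom_hull_mem[OF n(1)] atom_hull_mem[OF m]] y by blast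
  moreover have "n = m" if "?g m \<subseteq> ?g n"
  proof -
    have "vert m \<subseteq> vert n"
      using morphism_mono[OF \<rho> atom_hull_mem[OF m] atom_hull_mem[OF n(1)] that]
        morphism_atom_hull[OF m] morphism_atom_hull[OF n(1)] by simp
    then show ?thesis using n(2) vert_inject[OF m n(1)] by blast
  qed
  ultimately show "z \<in> ?g m" using yz_n by blast
qed

lemma cluster_hull_join_cluster:
  assumes "m \<in> {1..k}"
  shows "cluster_hull G (join_cluster m) = cluster_hull G {p m, q m}"
proof
  show "cluster_hull G (join_cluster m) \<subseteq> cluster_hull G {p m, q m}"
    by (rule cluster_hull_least[OF atom_hull_mem[OF assms] join_cluster_subset_atom_hull[OF assms]])
  show "cluster_hull G {p m, q m} \<subseteq> cluster_hull G (join_cluster m)"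
    by (rule hull_mono[OF atom_in_join_cluster[OF assms]])
qed

lemma cluster_hull_inj_on_join_clusters: "inj_on (cluster_hull G) (join_cluster ` {1..k})"
  by (rule inj_onI) (auto simp: cluster_hull_join_cluster atom_hull_inject)

lemma join_forest_le: "forest_le I join_forest G"
proof -
  have "forest_morphism I join_forest G (cluster_hull G)"
  proof (rule cluster_hull_morphism[OF join_forest_is_forest forest_G])
    fix C assume "C \<in> join_forest"
    then show "\<exists>D\<in>G. C \<subseteq> D"
    proof (cases rule: join_forestE)
      case (1 i)
      then show ?thesis using forest_singleton[OF forest_G] by blast
    next
      case (2 m)
      then show ?thesis using atom_hull_mem join_cluster_subset_atom_hull by blast
    qed
  next
    fix C A assume C: "C \<in> inner join_forest" and A: "A \<in> children join_forest C"
    obtain m where m: "m \<in> {1..k}" "C = join_cluster m" using C inner_join_forest by blast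
    have "A \<in> join_forest" "A \<noteq> C" using A unfolding children_def by auto
    then show "cluster_hull G A \<noteq> cluster_hull G C"
    proof (cases rule: join_forestE)
      case (1 i)
      then have "cluster_hull G A = {i}" using cluster_hull_singleton[OF forest_G] by simp
      moreover have "{p m, q m} \<subseteq> cluster_hull G C"
        using m cluster_hull_join_cluster cluster_hull_subset[of "{p m, q m}" G] by simp
      ultimately show ?thesis using atom_leaves(3)[OF m(1)] by auto
    next
      case (2 n)
      then show ?thesis
        using cluster_hull_inj_on_join_clusters m \<open>A \<noteq> C\<close> unfolding inj_on_def by blast
    qed
  next
    show "inj_on (cluster_hull G) (inner join_forest)"
      using cluster_hull_inj_on_join_clusters inner_join_forest by (rule inj_on_subset)
  qed
  then show ?thesis unfolding forest_le_def using join_forest_is_forest forest_G by blast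
qed

lemma inner_image_if_le_join_forest:
  assumes "forest_le I G join_forest"
  shows "\<rho> ` inner G = vert ` {1..k}"
proof -
  let ?g = "\<lambda>m. cluster_hull G {p m, q m}"
  obtain \<chi> where \<chi>: "forest_morphism I G join_forest \<chi>"
    using assms unfolding forest_le_def by blast
  have inj_g: "inj_on ?g {1..k}" by (rule inj_onI) (simp add: atom_hull_inject)
  have finite_inner: "finite (inner join_forest)"
    using forest_finite[OF join_forest_is_forest] unfolding inner_def by simp
  have "card (inner G) \<le> card (inner join_forest)"
    using morphism_inj[OF \<chi>] morphism_inner[OF \<chi>] finite_inner by (intro card_inj_on_le) auto
  also have "\<dots> \<le> card (join_cluster ` {1..k})"
    using inner_join_forest by (intro card_mono) auto
  also have "\<dots> \<le> card (?g ` {1..k})"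
    using card_image_le[of "{1..k}" join_cluster] card_image[OF inj_g] by simp
  finally have "?g ` {1..k} = inner G"
    using atom_hull_inner forest_finite[OF forest_G] unfolding inner_def
    by (intro card_seteq) auto
  then have "\<rho> ` inner G = (\<lambda>m. \<rho> (?g m)) ` {1..k}" by (metis image_image)
  also have "\<dots> = vert ` {1..k}" by (rule image_cong) (simp_all add: morphism_atom_hull)
  finally show ?thesis .
qed

end

theorem join_forest_is_join: "is_join_below I T (\<lambda>m. atom I (p m) (q m)) {1..k} join_forest"
  unfolding is_join_below_def
proof (intro conjI allI impI ballI)
  show "forest_le I (atom I (p m) (q m)) join_forest" if "m \<in> {1..k}" for m
    using atom_le_iff[OF join_forest_is_forest atom_leaves[OF that]] atom_in_join_cluster[OF that]
      that unfolding join_forest_def by blast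
  have "forest_le I (atom I (p m) (q m)) T" if "m \<in> {1..k}" for m
    using atom_le_iff[OF forest_T atom_leaves[OF that]] leaves_in_T atom_leaves[OF that] by blast
  then show "forest_le I join_forest T"
    by (rule join_forest_le[OF forest_T forest_morphism_id[OF forest_T]])
  fix G assume G: "forest_le I G T \<and> (\<forall>m\<in>{1..k}. forest_le I (atom I (p m) (q m)) G)"
  then obtain \<rho> where "forest_morphism I G T \<rho>" unfolding forest_le_def by blast
  then show "forest_le I join_forest G"
    using join_forest_le G unfolding forest_le_def by blast
qed

lemma inner_image_of_join:
  assumes "is_join_below I T (\<lambda>m. atom I (p m) (q m)) {1..k} F" "forest_morphism I F T \<phi>"
  shows "\<phi> ` inner F = vert ` {1..k}"
proof (rule inner_image_if_le_join_forest)
  show "is_forest I F" using assms(1) unfolding is_join_below_def forest_le_def by blast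
  show "forest_le I (atom I (p m) (q m)) F" if "m \<in> {1..k}" for m
    using assms(1) that unfolding is_join_below_def by blast
  show "forest_le I F join_forest"
    using assms(1) join_forest_is_join unfolding is_join_below_def by blast
qed (rule assms(2))

end

theorem proposition5p3:
  fixes I :: "'a set" and T :: "'a set set" and k :: nat and p q :: "nat \<Rightarrow> 'a"
  assumes "finite I" and "is_tree I T"
    and "\<forall>m\<in>{1..k}. p m \<in> I \<and> q m \<in> I \<and> p m \<noteq> q m"
    and "inj_on (\<lambda>m. vtx T (p m) (q m)) {1..k}"
  shows "(\<exists>F. is_join_below I T (\<lambda>m. atom I (p m) (q m)) {1..k} F) \<and>
         (\<forall>F \<phi>. is_join_below I T (\<lambda>m. atom I (p m) (q m)) {1..k} F \<and> forest_morphism I F T \<phi>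
            \<longrightarrow> \<phi> ` inner F = (\<lambda>m. vtx T (p m) (q m)) ` {1..k})"
proof -
  \<comment> \<open>The hypothesis \<open>finite I\<close> is already part of \<open>is_tree I T\<close>.\<close>
  interpret distinct_vertex_atoms I T k p q
    using assms(2-4) by unfold_locales
  show ?thesis
    using join_forest_is_join inner_image_of_join unfolding vert_def by blast
qed

end
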